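(* Let $f_1,f_2$ be odd entire functions with $f_1'(0)\neq0$, $f_2'(0)\neq 0$. For such $f$ with expansion $f(z)=a_1z+a_3z^3+a_5z^5+a_7z^7+O(z^9)$ put $p(f)=a_3^2-2a_1a_5$, $q(f)=3a_1^2a_7-3a_1a_3a_5+a_3^3$, and, when $(p(f),q(f))\neq(0,0)$, $\mu(f)=p(f)^3/q(f)^2\in\mathbb{C}P^1=\mathbb{C}\cup\{\infty\}$. Suppose $(p(f_i),q(f_i))\neq(0,0)$ for $i=1,2$ and $\mu(f_1)=\mu(f_2)$. Then there exist $\alpha,\beta\in\mathbb{C}$ and $a\in\mathbb{C}\setminus\{0\}$ such that $f_2(z)-f_1(az)e^{\alpha z^2+\beta}$ vanishes to order at least $9$ at $z=0$.
   Context: Vanishing to order at least $9$ at $0$ means the Taylor coefficients of degrees $0,\dots,8$ at $0$ are all zero (the paper writes this as congruence modulo $\mathcal{M}^9$, $\mathcal{M}$ the ideal of entire functions vanishing at $0$). *)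

theory Defs
  imports "HOL-Complex_Analysis.Complex_Analysis"
begin

definition tcoeff :: "(complex \<Rightarrow> complex) \<Rightarrow> nat \<Rightarrow> complex" where
  "tcoeff f k = (deriv ^^ k) f 0 / of_nat (fact k)"

definition odd_entire :: "(complex \<Rightarrow> complex) \<Rightarrow> bool" where
  "odd_entire f \<longleftrightarrow> f holomorphic_on UNIV \<and> (\<forall>z. f (- z) = - f z)"

definition pinv :: "(complex \<Rightarrow> complex) \<Rightarrow> complex" where
  "pinv f = (tcoeff f 3)^2 - 2 * tcoeff f 1 * tcoeff f 5"

definition qinv :: "(complex \<Rightarrow> complex) \<Rightarrow> complex" where
  "qinv f = 3 * (tcoeff f 1)^2 * tcoeff f 7 - 3 * tcoeff f 1 * tcoeff f 3 * tcoeff f 5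
            + (tcoeff f 3)^3"

text \<open>mu f = p^3/q^2 in CP^1 = C \<union> {\<infinity>}; None represents \<infinity>
  (only meaningful when (p,q) \<noteq> (0,0)).\<close>
definition mu :: "(complex \<Rightarrow> complex) \<Rightarrow> complex option" where
  "mu f = (if qinv f = 0 then None else Some ((pinv f)^3 / (qinv f)^2))"

definition vanishes_to_order :: "nat \<Rightarrow> (complex \<Rightarrow> complex) \<Rightarrow> bool" where
  "vanishes_to_order n g \<longleftrightarrow> (\<forall>k<n. tcoeff g k = 0)"

end

theory Submission
  imports Defs
begin

(*
  The maps f(z) |-> c * f(a z) * exp(alpha z^2), with c = e^beta, act on the Taylor coefficients
  of degree at most 7 of odd functions, and p, q are relative invariants of weights 2 and 3:
  the action multiplies them by (c a^3)^2 and (c a^3)^3.  Equality of mu yields l <> 0 with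
  p(f2) = l^2 p(f1) and q(f2) = l^3 q(f1).  Choose a, c with c a^3 = l so that the linear
  coefficients agree, then alpha so that the cubic ones agree; since the linear coefficient is
  nonzero, the invariance of p and q forces the coefficients of z^5 and z^7 to agree as well.
  Even coefficients vanish on both sides by oddness.
*)

definition fps_odd :: "'a::zero fps \<Rightarrow> bool" where
  "fps_odd F \<longleftrightarrow> (\<forall>k. even k \<longrightarrow> F $ k = 0)"

definition fps_twist :: "'a::field_char_0 \<Rightarrow> 'a \<Rightarrow> 'a \<Rightarrow> 'a fps \<Rightarrow> 'a fps" where
  "fps_twist c a \<alpha> F =
     fps_const c * (fps_compose F (fps_const a * fps_X) * fps_compose (fps_exp \<alpha>) (fps_X ^ 2))"

lemma fps_nth_exp_compose_square:
  fixes \<alpha> :: "'a::field_char_0"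
  shows "fps_compose (fps_exp \<alpha>) (fps_X ^ 2) $ n =
           (if even n then \<alpha> ^ (n div 2) / fact (n div 2) else 0)"
proof -
  have "fps_compose (fps_exp \<alpha>) (fps_X ^ 2) $ n =
          (\<Sum>i=0..n. if n = 2 * i then \<alpha> ^ i / fact i else 0)"
    by (auto simp: fps_compose_nth power_mult[symmetric] fps_X_power_mult_nth intro!: sum.cong)
  also have "\<dots> = (if even n then \<alpha> ^ (n div 2) / fact (n div 2) else 0)"
  proof (cases "even n")
    case True
    then show ?thesis by (auto simp: sum.delta' elim!: evenE)
  next
    case False
    then have "n \<noteq> 2 * i" for i by auto
    with False show ?thesis by simp
  qed
  finally show ?thesis .
qed

lemma fps_twist_nth:
  "fps_twist c a \<alpha> F $ n =
     c * (\<Sum>i=0..n. a^i * F $ i * (if even (n - i) then \<alpha> ^ ((n - i) div 2) / fact ((n - i) div 2) else 0))"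
  unfolding fps_twist_def fps_mult_left_const_nth
  unfolding fps_mult_nth by (simp add: fps_nth_exp_compose_square mult.assoc)

lemma fps_odd_twist:
  assumes "fps_odd F"
  shows "fps_odd (fps_twist c a \<alpha> F)"
proof -
  have "(\<Sum>i=0..n. a^i * F $ i *
          (if even (n - i) then \<alpha> ^ ((n - i) div 2) / fact ((n - i) div 2) else 0)) = 0"
    if "even n" for n
    using assms that by (intro sum.neutral) (auto simp: fps_odd_def)
  then show ?thesis
    by (simp add: fps_odd_def fps_twist_nth)
qed

lemma fps_twist_nth_odd_le_7:
  fixes F :: "'a::field_char_0 fps"
  assumes "fps_odd F"
  shows "fps_twist c a \<alpha> F $ 1 = c * (a * F $ 1)"
    and "fps_twist c a \<alpha> F $ 3 = c * (a^3 * F $ 3 + \<alpha> * (a * F $ 1))"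
    and "fps_twist c a \<alpha> F $ 5 = c * (a^5 * F $ 5 + \<alpha> * (a^3 * F $ 3) + \<alpha>^2/2 * (a * F $ 1))"
    and "fps_twist c a \<alpha> F $ 7 =
           c * (a^7 * F $ 7 + \<alpha> * (a^5 * F $ 5) + \<alpha>^2/2 * (a^3 * F $ 3) + \<alpha>^3/6 * (a * F $ 1))"
proof -
  have "{0..1::nat} = {0,1}" "{0..3::nat} = {0,1,2,3}" "{0..5::nat} = {0,1,2,3,4,5}"
    "{0..7::nat} = {0,1,2,3,4,5,6,7}"
    by auto
  moreover have "F $ 0 = 0" "F $ 2 = 0" "F $ 4 = 0" "F $ 6 = 0"
    using assms by (simp_all add: fps_odd_def)
  ultimately show "fps_twist c a \<alpha> F $ 1 = c * (a * F $ 1)"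
    and "fps_twist c a \<alpha> F $ 3 = c * (a^3 * F $ 3 + \<alpha> * (a * F $ 1))"
    and "fps_twist c a \<alpha> F $ 5 = c * (a^5 * F $ 5 + \<alpha> * (a^3 * F $ 3) + \<alpha>^2/2 * (a * F $ 1))"
    and "fps_twist c a \<alpha> F $ 7 =
           c * (a^7 * F $ 7 + \<alpha> * (a^5 * F $ 5) + \<alpha>^2/2 * (a^3 * F $ 3) + \<alpha>^3/6 * (a * F $ 1))"
    by (simp_all add: fps_twist_nth fact_numeral field_simps)
qed

definition fps_pinv :: "'a::comm_ring_1 fps \<Rightarrow> 'a" where
  "fps_pinv F = (F $ 3)^2 - 2 * F $ 1 * F $ 5"

definition fps_qinv :: "'a::comm_ring_1 fps \<Rightarrow> 'a" where
  "fps_qinv F = 3 * (F $ 1)^2 * F $ 7 - 3 * F $ 1 * F $ 3 * F $ 5 + (F $ 3)^3"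

lemma fps_pinv_twist:
  fixes F :: "'a::field_char_0 fps"
  assumes "fps_odd F"
  shows "fps_pinv (fps_twist c a \<alpha> F) = (c * a^3)^2 * fps_pinv F"
  unfolding fps_pinv_def fps_twist_nth_odd_le_7[OF assms] by (simp add: field_simps) algebra

lemma fps_qinv_twist:
  fixes F :: "'a::field_char_0 fps"
  assumes "fps_odd F"
  shows "fps_qinv (fps_twist c a \<alpha> F) = (c * a^3)^3 * fps_qinv F"
  unfolding fps_qinv_def fps_twist_nth_odd_le_7[OF assms] by (simp add: field_simps) algebra

lemma cube_square_ratio_eq_imp_weighted_scaling:
  fixes p1 q1 p2 q2 :: complex
  assumes "(p1, q1) \<noteq> (0, 0)" "(p2, q2) \<noteq> (0, 0)"
    and "(if q1 = 0 then None else Some (p1^3 / q1^2)) = (if q2 = 0 then None else Some (p2^3 / q2^2))"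
  shows "\<exists>l. l \<noteq> 0 \<and> p2 = l^2 * p1 \<and> q2 = l^3 * q1"
proof (cases "q1 = 0")
  case True
  with assms have "q2 = 0" "p1 \<noteq> 0" "p2 \<noteq> 0"
    by (auto split: if_splits)
  moreover have "(csqrt (p2 / p1))^2 = p2 / p1"
    by simp
  ultimately show ?thesis
    using True by (intro exI[of _ "csqrt (p2 / p1)"]) (auto simp: field_simps)
next
  case q1: False
  with assms have q2: "q2 \<noteq> 0" and "p1^3 / q1^2 = p2^3 / q2^2"
    by (auto split: if_splits)
  then have ratio: "p1^3 * q2^2 = p2^3 * q1^2"
    using q1 by (simp add: field_simps)
  show ?thesis
  proof (cases "p1 = 0")
    case True
    with ratio q1 q2 have "p2 = 0"
      by simp
    have "(exp (Ln (q2 / q1) / 3))^3 = exp (of_nat 3 * (Ln (q2 / q1) / 3))"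
      by (rule exp_of_nat_mult[symmetric])
    also have "\<dots> = q2 / q1"
      using q1 q2 by simp
    finally show ?thesis
      using True \<open>p2 = 0\<close> q1 by (intro exI[of _ "exp (Ln (q2 / q1) / 3)"]) (auto simp: field_simps)
  next
    case p1: False
    with ratio q1 q2 have p2: "p2 \<noteq> 0"
      by auto
    define l where "l = q2 * p1 / (q1 * p2)"
    have "l^2 * p1 * (q1^2 * p2^2) = p2 * (q1^2 * p2^2)"
      using q1 p2 ratio by (simp add: l_def field_simps power2_eq_square power3_eq_cube)
    moreover have "l^3 * q1 * (q1^2 * p2^3) = q2 * (q1^2 * p2^3)"
      using q1 p2 ratio by (simp add: l_def field_simps power2_eq_square power3_eq_cube)
    ultimately show ?thesis
      using p1 p2 q1 q2 by (intro exI[of _ l]) (simp add: l_def)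
  qed
qed

lemma exists_fps_twist_eq_below_9:
  fixes F G :: "complex fps"
  assumes "fps_odd F" "fps_odd G" and F1: "F $ 1 \<noteq> 0" and G1: "G $ 1 \<noteq> 0" and "l \<noteq> 0"
    and pinv: "fps_pinv G = l^2 * fps_pinv F" and qinv: "fps_qinv G = l^3 * fps_qinv F"
  shows "\<exists>c a \<alpha>. c \<noteq> 0 \<and> a \<noteq> 0 \<and> (\<forall>k<9. fps_twist c a \<alpha> F $ k = G $ k)"
proof -
  define a where "a = csqrt (l * F $ 1 / G $ 1)"
  have a2: "a^2 = l * F $ 1 / G $ 1"
    by (simp add: a_def)
  with F1 G1 \<open>l \<noteq> 0\<close> have "a \<noteq> 0"
    by auto
  define c where "c = l / a^3"
  have "c \<noteq> 0" and ca3: "c * a^3 = l"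
    using \<open>a \<noteq> 0\<close> \<open>l \<noteq> 0\<close> by (simp_all add: c_def)
  define \<alpha> where "\<alpha> = (G $ 3 / c - a^3 * F $ 3) / (a * F $ 1)"
  let ?T = "fps_twist c a \<alpha> F"
  note twist_nth = fps_twist_nth_odd_le_7[OF \<open>fps_odd F\<close>, of c a \<alpha>]
  have "?T $ 1 = c * (a * F $ 1)"
    by (fact twist_nth(1))
  also have "\<dots> = l * F $ 1 / a^2"
    using \<open>a \<noteq> 0\<close> by (simp add: c_def field_simps power3_eq_cube power2_eq_square)
  also have "\<dots> = G $ 1"
    using a2 F1 \<open>l \<noteq> 0\<close> by simp
  finally have T1: "?T $ 1 = G $ 1" .
  have "?T $ 3 = c * (a^3 * F $ 3 + \<alpha> * (a * F $ 1))"
    by (fact twist_nth(2))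
  also have "\<dots> = G $ 3"
    using \<open>a \<noteq> 0\<close> \<open>c \<noteq> 0\<close> F1 by (simp add: \<alpha>_def field_simps)
  finally have T3: "?T $ 3 = G $ 3" .
  have "fps_pinv ?T = fps_pinv G"
    using pinv by (simp add: fps_pinv_twist[OF \<open>fps_odd F\<close>] ca3)
  with T1 T3 G1 have T5: "?T $ 5 = G $ 5"
    by (simp add: fps_pinv_def)
  have "fps_qinv ?T = fps_qinv G"
    using qinv by (simp add: fps_qinv_twist[OF \<open>fps_odd F\<close>] ca3)
  with T1 T3 T5 G1 have T7: "?T $ 7 = G $ 7"
    by (simp add: fps_qinv_def)
  have "?T $ k = G $ k" if "k < 9" for k
  proof (cases "even k")
    case True
    with fps_odd_twist[OF \<open>fps_odd F\<close>] \<open>fps_odd G\<close> show ?thesis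
      by (simp add: fps_odd_def)
  next
    case False
    with \<open>k < 9\<close> have "k = 1 \<or> k = 3 \<or> k = 5 \<or> k = 7"
      by presburger
    with T1 T3 T5 T7 show ?thesis
      by auto
  qed
  with \<open>c \<noteq> 0\<close> \<open>a \<noteq> 0\<close> show ?thesis
    by blast
qed

lemma tcoeff_eq_fps_nth:
  fixes F :: "complex fps"
  assumes "f has_fps_expansion F"
  shows "tcoeff f k = F $ k"
  using fps_nth_fps_expansion[OF assms] by (simp add: tcoeff_def)

lemma pinv_qinv_eq_fps:
  fixes F :: "complex fps"
  assumes "f has_fps_expansion F"
  shows "pinv f = fps_pinv F" and "qinv f = fps_qinv F"
  by (simp_all add: pinv_def qinv_def fps_pinv_def fps_qinv_def tcoeff_eq_fps_nth[OF assms])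

lemma has_fps_expansion_odd_imp_fps_odd:
  fixes F :: "complex fps"
  assumes F: "f has_fps_expansion F" and odd: "\<And>z. f (- z) = - f z"
  shows "fps_odd F"
proof -
  have "(f \<circ> uminus) has_fps_expansion fps_compose F (- fps_X)"
    by (intro has_fps_expansion_compose F fps_expansion_intros) simp
  moreover have "f \<circ> uminus = (\<lambda>z. - f z)"
    using odd by (simp add: fun_eq_iff)
  ultimately have "fps_compose F (- fps_X) = - F"
    using F by (auto intro: fps_expansion_unique_complex fps_expansion_intros)
  then have "(-1) ^ k * F $ k = - F $ k" for k
    by (metis fps_compose_uminus' fps_neg_nth fps_nth_Abs_fps)
  then have "F $ k = - F $ k" if "even k" for k
    by (metis that neg_one_even_power mult_1)
  then show ?thesis
    by (simp add: fps_odd_def)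
qed

lemma odd_entire_fps_expansion:
  assumes "odd_entire f"
  shows "f has_fps_expansion fps_expansion f 0" and "fps_odd (fps_expansion f 0)"
proof -
  show F: "f has_fps_expansion fps_expansion f 0"
    using assms by (intro has_fps_expansion_fps_expansion[of UNIV]) (auto simp: odd_entire_def)
  show "fps_odd (fps_expansion f 0)"
    using assms by (intro has_fps_expansion_odd_imp_fps_odd[OF F]) (auto simp: odd_entire_def)
qed

lemma has_fps_expansion_twist:
  fixes f :: "complex \<Rightarrow> complex"
  assumes "f has_fps_expansion F"
  shows "(\<lambda>z. f (a * z) * exp (\<alpha> * z^2 + \<beta>)) has_fps_expansion fps_twist (exp \<beta>) a \<alpha> F"
proof -
  have "(\<lambda>z. exp \<beta> * ((f \<circ> (\<lambda>z. a * z)) z * ((\<lambda>w. exp (\<alpha> * w)) \<circ> (\<lambda>z. z^2)) z))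
          has_fps_expansion fps_twist (exp \<beta>) a \<alpha> F"
    unfolding fps_twist_def
    by (intro fps_expansion_intros has_fps_expansion_compose assms) auto
  then show ?thesis
    by (simp add: exp_add mult_ac)
qed

theorem lemma2:
  fixes f1 f2 :: "complex \<Rightarrow> complex"
  assumes "odd_entire f1" and "odd_entire f2"
    and "deriv f1 0 \<noteq> 0" and "deriv f2 0 \<noteq> 0"
    and "(pinv f1, qinv f1) \<noteq> (0, 0)" and "(pinv f2, qinv f2) \<noteq> (0, 0)"
    and "mu f1 = mu f2"
  shows "\<exists>\<alpha> \<beta> a. a \<noteq> 0 \<and>
           vanishes_to_order 9 (\<lambda>z. f2 z - f1 (a * z) * exp (\<alpha> * z^2 + \<beta>))"
proof -
  define F1 F2 where "F1 = fps_expansion f1 0" and "F2 = fps_expansion f2 0"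
  note F1 = odd_entire_fps_expansion[OF assms(1), folded F1_def]
  note F2 = odd_entire_fps_expansion[OF assms(2), folded F2_def]
  obtain l where l: "l \<noteq> 0" "fps_pinv F2 = l^2 * fps_pinv F1" "fps_qinv F2 = l^3 * fps_qinv F1"
    using cube_square_ratio_eq_imp_weighted_scaling[OF assms(5,6)] assms(7)
    unfolding mu_def pinv_qinv_eq_fps[OF F1(1)] pinv_qinv_eq_fps[OF F2(1)] by blast
  have "F1 $ 1 \<noteq> 0" "F2 $ 1 \<noteq> 0"
    using assms(3,4) tcoeff_eq_fps_nth[OF F1(1), of 1] tcoeff_eq_fps_nth[OF F2(1), of 1]
    by (simp_all add: tcoeff_def)
  then obtain c a \<alpha> where "c \<noteq> 0" "a \<noteq> 0" and agree: "\<forall>k<9. fps_twist c a \<alpha> F1 $ k = F2 $ k"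
    using exists_fps_twist_eq_below_9[OF F1(2) F2(2) _ _ l] by blast
  have "(\<lambda>z. f2 z - f1 (a * z) * exp (\<alpha> * z^2 + Ln c)) has_fps_expansion F2 - fps_twist c a \<alpha> F1"
    using has_fps_expansion_twist[OF F1(1), of a \<alpha> "Ln c"] F2(1) \<open>c \<noteq> 0\<close>
    by (auto intro: fps_expansion_intros)
  then have "vanishes_to_order 9 (\<lambda>z. f2 z - f1 (a * z) * exp (\<alpha> * z^2 + Ln c))"
    using agree by (simp add: vanishes_to_order_def tcoeff_eq_fps_nth)
  with \<open>a \<noteq> 0\<close> show ?thesis
    by blast
qed

end
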